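(* Let $w\in S_n$ and $v\in S_n$ with $v\le w$. Then the restriction $[\Omega_v]_{X_w}:=\iota([\Omega_v])$ is the unique Knutson–Tao class for $v$ in $H^*_T(X_w)$.
   Context: Let $G=GL_n(\mathbb{C})$, $B$ (resp. $B^-$) the invertible upper- (resp. lower-) triangular matrices, and $T$ the diagonal torus. Permutations are identified with permutation matrices via $we_i=e_{w(i)}$, and $s_{jk}$ is the transposition of $j,k$. $X_w=\overline{BwB/B}$, the Bruhat order is $v\le w$ iff $[v]\in X_w$, $\mathrm{Inv}(w)=\{t_i-t_j:i<j,\ w^{-1}(i)>w^{-1}(j)\}$, and $\ell(w)=|\mathrm{Inv}(w)|$. In GKM form, $H^*_T(X_w)$ is the ring of tuples $(p_u)_{u\le w}$, $p_u\in\mathbb{C}[t_1,\ldots,t_n]$, with $p_u-p_{s_{jk}u}\in\langle t_j-t_k\rangle$ whenever $j<k$ and $u,s_{jk}u\le w$; $H^*_T(G/B)$ is the case $w=w_0$. Restriction $\iota:H^*_T(G/B)\to H^*_T(X_w)$ is $\iota((p_u)_{u\in S_n})=(p_u)_{u\le w}$. The Schubert class $[\Omega_v]\in H^*_T(G/B)$ is the equivariant class of $\overline{B^-vB/B}$; writing $[\Omega_v]=(p^v_u)_u$, one has $p^v_u=0$ unless $u\ge v$, each nonzero $p^v_u$ homogeneous of degree $\ell(v)$, and $p^v_v=\prod_{\beta\in\mathrm{Inv}(v)}\beta$. The moment graph of $X_w$ has vertices $\{u\le w\}$ and an edge between $u$ and $s_{jk}u$ (both $\le w$), directed from the Bruhat-larger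 to the Bruhat-smaller endpoint and labeled $t_j-t_k$. The edges out of $u$ are labeled exactly by $\mathrm{Inv}(u)$. A Knutson–Tao class for $v$ in $H^*_T(X_w)$ is $(q_u)_{u\le w}\in H^*_T(X_w)$ with: $q_v$ equal to the product of the labels of the edges out of $v$; every nonzero $q_u$ homogeneous of degree $\deg q_v$; and $q_u=0$ whenever there is no directed path of positive length from $u$ to $v$. *)

theory Defs
  imports "HOL-Library.Poly_Mapping" "HOL-Combinatorics.Combinatorics"
begin

type_synonym mpoly = "(nat \<Rightarrow>\<^sub>0 nat) \<Rightarrow>\<^sub>0 complex"

definition tvar :: "nat \<Rightarrow> mpoly" where
  "tvar i = Poly_Mapping.single (Poly_Mapping.single i 1) 1"

definition mdeg :: "(nat \<Rightarrow>\<^sub>0 nat) \<Rightarrow> nat" where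
  "mdeg m = (\<Sum>i\<in>Poly_Mapping.keys m. Poly_Mapping.lookup m i)"

definition homogeneous :: "nat \<Rightarrow> mpoly \<Rightarrow> bool" where
  "homogeneous d p \<longleftrightarrow> (\<forall>m\<in>Poly_Mapping.keys p. mdeg m = d)"

(* total degree (meaningful for nonzero polynomials) *)
definition poly_deg :: "mpoly \<Rightarrow> nat" where
  "poly_deg p = Max (mdeg ` Poly_Mapping.keys p)"

definition lbl :: "nat \<Rightarrow> nat \<Rightarrow> mpoly" where
  "lbl j k = tvar j - tvar k"

definition Sn :: "nat \<Rightarrow> (nat \<Rightarrow> nat) set" where
  "Sn n = {u. u permutes {1..n}}"

definition stu :: "nat \<Rightarrow> nat \<Rightarrow> (nat \<Rightarrow> nat) \<Rightarrow> (nat \<Rightarrow> nat)" where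
  "stu j k u = transpose j k \<circ> u"

(* Bruhat order via the tableau (rank) criterion:
   v <= w iff #{a <= i. v a >= k} <= #{a <= i. w a >= k} for all i,k *)
definition bcount :: "(nat \<Rightarrow> nat) \<Rightarrow> nat \<Rightarrow> nat \<Rightarrow> nat" where
  "bcount u i k = card {a \<in> {1..i}. k \<le> u a}"

definition bruhat_le :: "nat \<Rightarrow> (nat \<Rightarrow> nat) \<Rightarrow> (nat \<Rightarrow> nat) \<Rightarrow> bool" where
  "bruhat_le n v w \<longleftrightarrow> v \<in> Sn n \<and> w \<in> Sn n \<and>
     (\<forall>i\<in>{1..n}. \<forall>k\<in>{1..n}. bcount v i k \<le> bcount w i k)"

definition bruhat_lt :: "nat \<Rightarrow> (nat \<Rightarrow> nat) \<Rightarrow> (nat \<Rightarrow> nat) \<Rightarrow> bool" where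
  "bruhat_lt n v w \<longleftrightarrow> bruhat_le n v w \<and> v \<noteq> w"

(* Inv(w) = { t_i - t_j : i<j, w^{-1}(i) > w^{-1}(j) }, recorded as pairs (i,j) *)
definition inv_set :: "nat \<Rightarrow> (nat \<Rightarrow> nat) \<Rightarrow> (nat \<times> nat) set" where
  "inv_set n w = {(i,j). 1 \<le> i \<and> i < j \<and> j \<le> n \<and> inv w i > inv w j}"

definition len :: "nat \<Rightarrow> (nat \<Rightarrow> nat) \<Rightarrow> nat" where
  "len n w = card (inv_set n w)"

definition inv_prod :: "nat \<Rightarrow> (nat \<Rightarrow> nat) \<Rightarrow> mpoly" where
  "inv_prod n w = (\<Prod>(i,j)\<in>inv_set n w. lbl i j)"

definition gkm :: "nat \<Rightarrow> (nat \<Rightarrow> nat) set \<Rightarrow> ((nat \<Rightarrow> nat) \<Rightarrow> mpoly) \<Rightarrow> bool" where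
  "gkm n V p \<longleftrightarrow> (\<forall>u j k. u \<in> V \<and> 1 \<le> j \<and> j < k \<and> k \<le> n \<and> stu j k u \<in> V
       \<longrightarrow> lbl j k dvd (p u - p (stu j k u)))"

definition HT_flag :: "nat \<Rightarrow> ((nat \<Rightarrow> nat) \<Rightarrow> mpoly) \<Rightarrow> bool" where
  "HT_flag n p \<longleftrightarrow> gkm n (Sn n) p"

definition HT_X :: "nat \<Rightarrow> (nat \<Rightarrow> nat) \<Rightarrow> ((nat \<Rightarrow> nat) \<Rightarrow> mpoly) \<Rightarrow> bool" where
  "HT_X n w q \<longleftrightarrow> gkm n {u. bruhat_le n u w} q"

definition iota :: "nat \<Rightarrow> (nat \<Rightarrow> nat) \<Rightarrow> ((nat \<Rightarrow> nat) \<Rightarrow> mpoly) \<Rightarrow> ((nat \<Rightarrow> nat) \<Rightarrow> mpoly)" where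
  "iota n w p = (\<lambda>u. if bruhat_le n u w then p u else 0)"

definition mg_edge :: "nat \<Rightarrow> (nat \<Rightarrow> nat) \<Rightarrow> (nat \<Rightarrow> nat) \<Rightarrow> (nat \<Rightarrow> nat) \<Rightarrow> bool" where
  "mg_edge n w u u' \<longleftrightarrow> bruhat_le n u w \<and> bruhat_le n u' w \<and>
     (\<exists>j k. 1 \<le> j \<and> j < k \<and> k \<le> n \<and> u' = stu j k u) \<and> bruhat_lt n u' u"

definition out_edges :: "nat \<Rightarrow> (nat \<Rightarrow> nat) \<Rightarrow> (nat \<Rightarrow> nat) \<Rightarrow> (nat \<times> nat) set" where
  "out_edges n w u = {(j,k). 1 \<le> j \<and> j < k \<and> k \<le> n \<and> mg_edge n w u (stu j k u)}"

definition schubert_class :: "nat \<Rightarrow> (nat \<Rightarrow> nat) \<Rightarrow> ((nat \<Rightarrow> nat) \<Rightarrow> mpoly) \<Rightarrow> bool" where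
  "schubert_class n v p \<longleftrightarrow> HT_flag n p \<and>
     (\<forall>u\<in>Sn n. \<not> bruhat_le n v u \<longrightarrow> p u = 0) \<and>
     (\<forall>u\<in>Sn n. p u \<noteq> 0 \<longrightarrow> homogeneous (len n v) (p u)) \<and>
     p v = inv_prod n v"

definition KT_class :: "nat \<Rightarrow> (nat \<Rightarrow> nat) \<Rightarrow> (nat \<Rightarrow> nat) \<Rightarrow> ((nat \<Rightarrow> nat) \<Rightarrow> mpoly) \<Rightarrow> bool" where
  "KT_class n w v q \<longleftrightarrow> HT_X n w q \<and>
     q v = (\<Prod>(j,k)\<in>out_edges n w v. lbl j k) \<and>
     (\<forall>u. bruhat_le n u w \<and> q u \<noteq> 0 \<longrightarrow> homogeneous (poly_deg (q v)) (q u)) \<and>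
     (\<forall>u. bruhat_le n u w \<and> u \<noteq> v \<and> \<not> (mg_edge n w)\<^sup>+\<^sup>+ u v \<longrightarrow> q u = 0)"

end

theory Submission
  imports Defs
begin

(* The restriction of [Omega_v] inherits the GKM conditions, the degrees and the support
   from [Omega_v].  What has to be checked is the shape of the moment graph: the edges out of
   a vertex u are labelled by Inv(u), and every u with v < u <= w is joined to v by a
   descending path.  For the latter, let a be the first position where v and u differ; then
   v(a) < u(a), and swapping u(a) with the value of the first position b > a such that
   v(a) <= u(b) < u(a) gives an inversion (j, k) of u with v <= s_jk u < u.

   Uniqueness: the difference of two Knutson-Tao classes is a GKM class, homogeneous of
   degree l(v), that can be nonzero only at vertices u with l(u) > l(v).  By induction on
   l(u) it vanishes at every s_jk u with (j, k) in Inv(u), so its value at u is divisible by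
   the l(u) labels t_j - t_k.  These are pairwise non-associate primes (the substitution
   t_k := t_j is a ring homomorphism with kernel (t_j - t_k)), and a nonzero homogeneous
   polynomial of degree l(v) < l(u) cannot have l(u) distinct linear factors. *)

section \<open>Transpositions and the Bruhat order\<close>

lemma Sn_inverses [simp]:
  assumes "u \<in> Sn n"
  shows "u (inv u x) = x" "inv u (u x) = x"
  using assms by (simp_all add: Sn_def permutes_inverses)

lemma Sn_image:
  assumes "u \<in> Sn n" "x \<in> {1..n}"
  shows "u x \<in> {1..n}" "inv u x \<in> {1..n}"
  using assms permutes_in_image[of u "{1..n}"] permutes_in_image[OF permutes_inv, of u "{1..n}"]
  unfolding Sn_def by blast+

lemma Sn_fixpoint: "u \<in> Sn n \<Longrightarrow> x \<notin> {1..n} \<Longrightarrow> u x = x"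
  by (simp add: Sn_def permutes_not_in)

lemma stu_in_Sn: "u \<in> Sn n \<Longrightarrow> j \<in> {1..n} \<Longrightarrow> k \<in> {1..n} \<Longrightarrow> stu j k u \<in> Sn n"
  unfolding Sn_def stu_def by (blast intro: permutes_compose permutes_swap_id)

lemma stu_stu [simp]: "stu j k (stu j k u) = u"
  by (simp add: stu_def fun_eq_iff)

lemma inv_stu: "u \<in> Sn n \<Longrightarrow> inv (stu j k u) = inv u \<circ> transpose j k"
  unfolding Sn_def stu_def
  by (simp add: permutes_bij o_inv_distrib)

lemma inv_set_iff:
  "(j, k) \<in> inv_set n u \<longleftrightarrow> 1 \<le> j \<and> j < k \<and> k \<le> n \<and> inv u k < inv u j"
  by (simp add: inv_set_def)

lemma finite_inv_set: "finite (inv_set n u)"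
  by (rule finite_subset[of _ "{1..n} \<times> {1..n}"]) (auto simp: inv_set_def)

lemma bruhat_le_trans: "bruhat_le n u v \<Longrightarrow> bruhat_le n v w \<Longrightarrow> bruhat_le n u w"
  unfolding bruhat_le_def by (meson le_trans)

lemma bcount_stu_inversion:
  assumes u: "u \<in> Sn n" and jk: "1 \<le> j" "j < k" "k \<le> n" and inv: "inv u k < inv u j"
  shows "bcount (stu j k u) i m
           + (if inv u k \<le> i \<and> i < inv u j \<and> j < m \<and> m \<le> k then 1 else 0)
         = bcount u i m"
proof -
  define a where "a = inv u k"
  define b where "b = inv u j"
  have ua: "u a = k" and ub: "u b = j" using u by (simp_all add: a_def b_def)
  have a: "a \<in> {1..n}" and b: "b \<in> {1..n}" using Sn_image[OF u] jk by (auto simp: a_def b_def)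
  have "a < b" using inv by (simp add: a_def b_def)
  have swap: "stu j k u p = (if p = a then j else if p = b then k else u p)" for p
  proof -
    have "p \<noteq> a \<Longrightarrow> u p \<noteq> k" "p \<noteq> b \<Longrightarrow> u p \<noteq> j"
      using Sn_inverses(2)[OF u] by (metis a_def, metis b_def)
    then show ?thesis using ua ub jk by (auto simp: stu_def transpose_def)
  qed
  define A where "A = {p \<in> {1..i}. m \<le> u p}"
  define A' where "A' = {p \<in> {1..i}. m \<le> stu j k u p}"
  have fin: "finite A" by (simp add: A_def)
  have "card A' + (if a \<le> i \<and> i < b \<and> j < m \<and> m \<le> k then 1 else 0) = card A"
  proof (cases "a \<le> i \<and> j < m \<and> m \<le> k")
    case window: True
    then have "a \<in> A" using a ua by (auto simp: A_def)
    show ?thesis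
    proof (cases "i < b")
      case True
      then have "A' = A - {a}" using window ua ub by (auto simp: A_def A'_def swap)
      then show ?thesis using True window card.remove[OF fin \<open>a \<in> A\<close>] by simp
    next
      case False
      then have "A' = insert b (A - {a})" "b \<notin> A"
        using window \<open>a < b\<close> b ua ub by (auto simp: A_def A'_def swap)
      then show ?thesis using False fin card.remove[OF fin \<open>a \<in> A\<close>] by simp
    qed
  next
    case False
    then have "A' = A" using a b \<open>a < b\<close> ua ub jk by (auto simp: A_def A'_def swap)
    then show ?thesis using False by auto
  qed
  then show ?thesis by (simp add: bcount_def A_def A'_def a_def b_def)
qed

lemma stu_bruhat_lt_iff_inversion:
  assumes u: "u \<in> Sn n" and jk: "1 \<le> j" "j < k" "k \<le> n"
  shows "bruhat_lt n (stu j k u) u \<longleftrightarrow> (j, k) \<in> inv_set n u"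
proof
  assume lt: "bruhat_lt n (stu j k u) u"
  define u' where "u' = stu j k u"
  have u': "u' \<in> Sn n" using stu_in_Sn[OF u] jk by (auto simp: u'_def)
  have inv_u': "inv u' = inv u \<circ> transpose j k" using inv_stu[OF u] by (simp add: u'_def)
  have "inv u j \<noteq> inv u k" using jk(2) Sn_inverses(1)[OF u] by (metis less_irrefl)
  moreover have "\<not> inv u j < inv u k"
  proof
    assume "inv u j < inv u k"
    then have "inv u' k < inv u' j" by (simp add: inv_u')
    moreover have "stu j k u' = u" by (simp add: u'_def)
    ultimately have "bcount u (inv u j) k + 1 = bcount u' (inv u j) k"
      using bcount_stu_inversion[OF u' jk, of "inv u j" k] \<open>inv u j < inv u k\<close> jk(2)
      by (simp add: inv_u')
    moreover have "inv u j \<in> {1..n}" using Sn_image[OF u] jk by auto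
    then have "bcount u' (inv u j) k \<le> bcount u (inv u j) k"
      using lt jk by (auto simp: bruhat_lt_def bruhat_le_def u'_def)
    ultimately show False by simp
  qed
  ultimately show "(j, k) \<in> inv_set n u" using jk by (auto simp: inv_set_iff)
next
  assume "(j, k) \<in> inv_set n u"
  then have inv: "inv u k < inv u j" by (simp add: inv_set_iff)
  have "bcount (stu j k u) i m \<le> bcount u i m" for i m
    using bcount_stu_inversion[OF u jk inv, of i m] by linarith
  moreover have "stu j k u (inv u k) \<noteq> u (inv u k)"
    using u jk by (simp add: stu_def transpose_def)
  ultimately show "bruhat_lt n (stu j k u) u"
    using u stu_in_Sn[OF u] jk by (auto simp: bruhat_lt_def bruhat_le_def)
qed

lemma bruhat_lt_stu_inversion:
  "u \<in> Sn n \<Longrightarrow> (j, k) \<in> inv_set n u \<Longrightarrow> bruhat_lt n (stu j k u) u"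
  using stu_bruhat_lt_iff_inversion by (auto simp: inv_set_iff)

lemma mg_edge_stu_inversion:
  assumes "bruhat_le n u w" "(j, k) \<in> inv_set n u"
  shows "mg_edge n w u (stu j k u)"
proof -
  have "bruhat_lt n (stu j k u) u"
    using assms by (auto simp: bruhat_le_def intro: bruhat_lt_stu_inversion)
  then show ?thesis
    using assms by (auto simp: mg_edge_def bruhat_lt_def inv_set_iff intro: bruhat_le_trans)
qed

lemma out_edges_eq_inv_set:
  assumes "bruhat_le n u w"
  shows "out_edges n w u = inv_set n u"
proof -
  have u: "u \<in> Sn n" using assms by (simp add: bruhat_le_def)
  have "mg_edge n w u (stu j k u) \<longleftrightarrow> (j, k) \<in> inv_set n u" if "1 \<le> j" "j < k" "k \<le> n" for j k
    using stu_bruhat_lt_iff_inversion[OF u that] mg_edge_stu_inversion[OF assms]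
    by (auto simp: mg_edge_def)
  then show ?thesis by (auto simp: out_edges_def inv_set_iff)
qed

lemma card_inversions_transpose_less:
  fixes f :: "nat \<Rightarrow> nat"
  assumes jk: "1 \<le> j" "j < k" "k \<le> n" and inv: "f k < f j"
  shows "card {(p, q). 1 \<le> p \<and> p < q \<and> q \<le> n \<and> f (transpose j k q) < f (transpose j k p)}
       < card {(p, q). 1 \<le> p \<and> p < q \<and> q \<le> n \<and> f q < f p}"
proof -
  let ?t = "transpose j k"
  define I' where "I' = {(p, q). 1 \<le> p \<and> p < q \<and> q \<le> n \<and> f (?t q) < f (?t p)}"
  define I where "I = {(p, q). 1 \<le> p \<and> p < q \<and> q \<le> n \<and> f q < f p}"
  define g where "g = (\<lambda>(p, q). if ?t p < ?t q then (?t p, ?t q) else (p, q))"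
  have "finite I"
    by (rule finite_subset[of _ "{1..n} \<times> {1..n}"]) (auto simp: I_def)
  have "inj_on g I'"
    by (auto simp: inj_on_def I'_def g_def transpose_def split: if_splits)
  moreover have "g ` I' \<subseteq> I - {(j, k)}"
    using jk inv by (auto simp: I'_def I_def g_def transpose_def split: if_splits)
  ultimately have "card I' \<le> card (I - {(j, k)})"
    using \<open>finite I\<close> by (intro card_inj_on_le) auto
  also have "\<dots> < card I"
    using \<open>finite I\<close> jk inv by (intro card_Diff1_less) (auto simp: I_def)
  finally show ?thesis by (simp add: I'_def I_def)
qed

lemma len_stu_inversion_less:
  assumes u: "u \<in> Sn n" and jk: "(j, k) \<in> inv_set n u"
  shows "len n (stu j k u) < len n u"
proof -
  have "inv_set n (stu j k u) = {(p, q). 1 \<le> p \<and> p < q \<and> q \<le> n \<and>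
      inv u (transpose j k q) < inv u (transpose j k p)}"
    by (auto simp: inv_set_def inv_stu[OF u])
  moreover have "inv_set n u = {(p, q). 1 \<le> p \<and> p < q \<and> q \<le> n \<and> inv u q < inv u p}"
    by (auto simp: inv_set_def)
  ultimately show ?thesis
    using card_inversions_transpose_less[of j k n "inv u"] jk by (simp add: len_def inv_set_iff)
qed

lemma mg_edge_len_less: "mg_edge n w u u' \<Longrightarrow> len n u' < len n u"
  by (auto simp: mg_edge_def bruhat_le_def stu_bruhat_lt_iff_inversion
      intro!: len_stu_inversion_less)

lemma mg_path_len_less: "(mg_edge n w)\<^sup>+\<^sup>+ u u' \<Longrightarrow> len n u' < len n u"
  by (induction rule: tranclp.induct) (auto dest: mg_edge_len_less)

lemma bcount_split:
  assumes "1 \<le> a" "a \<le> Suc i"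
  shows "bcount u i m = bcount u (a - 1) m + card {p \<in> {a..i}. m \<le> u p}"
proof -
  have "{p \<in> {1..i}. m \<le> u p} = {p \<in> {1..a - 1}. m \<le> u p} \<union> {p \<in> {a..i}. m \<le> u p}"
    using assms by auto
  moreover have "{p \<in> {1..a - 1}. m \<le> u p} \<inter> {p \<in> {a..i}. m \<le> u p} = {}"
    using assms by auto
  ultimately show ?thesis unfolding bcount_def by (simp add: card_Un_disjoint)
qed

lemma bcount_eq_if_agree_below:
  "(\<And>p. p < a \<Longrightarrow> v p = u p) \<Longrightarrow> bcount v (a - 1) m = bcount u (a - 1) m"
  unfolding bcount_def by (rule arg_cong[where f = card]) auto

lemma bruhat_le_first_difference_less:
  assumes le: "bruhat_le n v u" and agree: "\<And>p. p < a \<Longrightarrow> v p = u p" and diff: "v a \<noteq> u a"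
  shows "v a < u a"
proof (rule ccontr)
  assume "\<not> v a < u a"
  with diff have "u a < v a" by simp
  have v: "v \<in> Sn n" and u: "u \<in> Sn n" using le by (auto simp: bruhat_le_def)
  have a: "a \<in> {1..n}" using diff Sn_fixpoint[OF u] Sn_fixpoint[OF v] by metis
  then have "v a \<in> {1..n}" using Sn_image[OF v] by blast
  have "{p \<in> {a..a}. v a \<le> v p} = {a}" by auto
  then have "bcount v a (v a) = bcount v (a - 1) (v a) + 1"
    using bcount_split[of a a v "v a"] a by simp
  moreover have "bcount u a (v a) = bcount u (a - 1) (v a)"
    using bcount_split[of a a u "v a"] a \<open>u a < v a\<close> by simp
  moreover have "bcount v a (v a) \<le> bcount u a (v a)"
    using le a \<open>v a \<in> {1..n}\<close> by (auto simp: bruhat_le_def)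
  moreover have "bcount v (a - 1) (v a) = bcount u (a - 1) (v a)"
    using agree by (rule bcount_eq_if_agree_below)
  ultimately show False by simp
qed

lemma bcount_less_in_gap:
  assumes le: "bruhat_le n v u" and agree: "\<And>p. p < a \<Longrightarrow> v p = u p"
    and m: "v a < m" "m \<le> u a"
    and gap: "\<And>p. a < p \<Longrightarrow> p \<le> i \<Longrightarrow> \<not> (v a \<le> u p \<and> u p < u a)"
    and i: "1 \<le> a" "a \<le> i" "i \<le> n"
  shows "bcount v i m < bcount u i m"
proof -
  let ?x = "v a"
  have "?x \<in> {1..n}" using Sn_image(1)[of v n a] le i by (auto simp: bruhat_le_def)
  then have "bcount v i ?x \<le> bcount u i ?x" using le i by (auto simp: bruhat_le_def)
  have "{p \<in> {a..i}. m \<le> u p} = {p \<in> {a..i}. ?x \<le> u p}"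
    using m gap by (force simp: le_less)
  moreover have "card {p \<in> {a..i}. m \<le> v p} < card {p \<in> {a..i}. ?x \<le> v p}"
  proof (rule psubset_card_mono)
    have "a \<in> {p \<in> {a..i}. ?x \<le> v p} - {p \<in> {a..i}. m \<le> v p}" using m i by auto
    moreover have "{p \<in> {a..i}. m \<le> v p} \<subseteq> {p \<in> {a..i}. ?x \<le> v p}" using m by auto
    ultimately show "{p \<in> {a..i}. m \<le> v p} \<subset> {p \<in> {a..i}. ?x \<le> v p}" by blast
  qed simp
  moreover have "bcount v (a - 1) k = bcount u (a - 1) k" for k
    using agree by (rule bcount_eq_if_agree_below)
  ultimately show ?thesis
    using \<open>bcount v i ?x \<le> bcount u i ?x\<close> i
      bcount_split[of a i v m] bcount_split[of a i u m] bcount_split[of a i v ?x] bcount_split[of a i u ?x]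
    by simp
qed

lemma bruhat_lt_below_stu_inversion:
  assumes lt: "bruhat_lt n v u"
  shows "\<exists>(j, k)\<in>inv_set n u. bruhat_le n v (stu j k u)"
proof -
  have le: "bruhat_le n v u" and "v \<noteq> u" using lt by (auto simp: bruhat_lt_def)
  have u: "u \<in> Sn n" and v: "v \<in> Sn n" using le by (auto simp: bruhat_le_def)
  define a where "a = (LEAST p. v p \<noteq> u p)"
  have "\<exists>p. v p \<noteq> u p" using \<open>v \<noteq> u\<close> by auto
  then have diff: "v a \<noteq> u a" unfolding a_def by (rule LeastI_ex)
  have agree: "v p = u p" if "p < a" for p using that not_less_Least unfolding a_def by blast
  have a: "a \<in> {1..n}" using diff Sn_fixpoint[OF u] Sn_fixpoint[OF v] by metis
  define x where "x = v a"
  define y where "y = u a"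
  have "x < y" using bruhat_le_first_difference_less[OF le agree diff] by (simp add: x_def y_def)
  have x: "x \<in> {1..n}" and y: "y \<in> {1..n}" using a Sn_image u v by (auto simp: x_def y_def)
  \<comment> \<open>the position of x in u is a candidate for b below\<close>
  define c where "c = inv u x"
  have "a < c"
  proof -
    have "c \<noteq> a" using \<open>x < y\<close> u by (auto simp: c_def y_def)
    moreover have "\<not> c < a"
    proof
      assume "c < a"
      then have "v c = v a" using agree[of c] u by (simp add: c_def x_def)
      then have "c = a" using Sn_inverses(2)[OF v] by metis
      with \<open>c < a\<close> show False by simp
    qed
    ultimately show ?thesis by simp
  qed
  define b where "b = (LEAST p. a < p \<and> x \<le> u p \<and> u p < y)"
  have "a < c \<and> x \<le> u c \<and> u c < y" using \<open>a < c\<close> \<open>x < y\<close> u by (simp add: c_def)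
  then have b: "a < b \<and> x \<le> u b \<and> u b < y" and "b \<le> c"
    unfolding b_def by (rule LeastI, rule Least_le)
  have gap: "\<not> (x \<le> u p \<and> u p < y)" if "a < p" "p < b" for p
    using that not_less_Least unfolding b_def by blast
  have "c \<le> n" using Sn_image(2)[OF u x] by (simp add: c_def)
  define z where "z = u b"
  have jk: "1 \<le> z" "z < y" "y \<le> n" "inv u y < inv u z"
    using b x y u \<open>b \<le> c\<close> \<open>c \<le> n\<close> by (auto simp: z_def y_def)
  then have inversion: "(z, y) \<in> inv_set n u" by (simp add: inv_set_iff)
  have "bcount v i m \<le> bcount (stu z y u) i m" if "i \<in> {1..n}" "m \<in> {1..n}" for i m
  proof (cases "a \<le> i \<and> i < b \<and> z < m \<and> m \<le> y")
    case True
    then have "bcount v i m < bcount u i m"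
      using gap a b that unfolding x_def y_def z_def by (intro bcount_less_in_gap[OF le agree]) auto
    then show ?thesis using bcount_stu_inversion[OF u jk, of i m] True u by (simp add: y_def z_def)
  next
    case False
    then show ?thesis using bcount_stu_inversion[OF u jk, of i m] le that u
      by (auto simp: bruhat_le_def y_def z_def)
  qed
  moreover have "stu z y u \<in> Sn n" using stu_in_Sn[OF u] jk by auto
  ultimately have "bruhat_le n v (stu z y u)" using v by (simp add: bruhat_le_def)
  with inversion show ?thesis by blast
qed

lemma mg_path_if_bruhat_lt:
  assumes "bruhat_le n u w" "bruhat_lt n v u"
  shows "(mg_edge n w)\<^sup>+\<^sup>+ u v"
  using assms
proof (induction "len n u" arbitrary: u rule: less_induct)
  case less
  have u: "u \<in> Sn n" using less.prems by (simp add: bruhat_le_def)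
  obtain j k where inversion: "(j, k) \<in> inv_set n u" and below: "bruhat_le n v (stu j k u)"
    using bruhat_lt_below_stu_inversion[OF less.prems(2)] by blast
  have edge: "mg_edge n w u (stu j k u)" by (rule mg_edge_stu_inversion[OF less.prems(1) inversion])
  show ?case
  proof (cases "stu j k u = v")
    case True
    then show ?thesis using edge by auto
  next
    case False
    have "(mg_edge n w)\<^sup>+\<^sup>+ (stu j k u) v"
      using less.hyps[OF len_stu_inversion_less[OF u inversion]] edge below False
      by (auto simp: mg_edge_def bruhat_lt_def)
    then show ?thesis using edge by (meson tranclp_into_tranclp2)
  qed
qed

section \<open>Linear factors of polynomials\<close>

lemma poly_mapping_sum_single:
  fixes f :: "'a \<Rightarrow>\<^sub>0 'b::comm_monoid_add"
  assumes "finite K" "Poly_Mapping.keys f \<subseteq> K"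
  shows "f = (\<Sum>m\<in>K. Poly_Mapping.single m (Poly_Mapping.lookup f m))"
proof (rule poly_mapping_eqI)
  fix k
  have "Poly_Mapping.lookup (\<Sum>m\<in>K. Poly_Mapping.single m (Poly_Mapping.lookup f m)) k
      = (\<Sum>m\<in>K. if m = k then Poly_Mapping.lookup f m else 0)"
    by (simp add: lookup_sum lookup_single when_def)
  also have "\<dots> = Poly_Mapping.lookup f k"
    using assms by (auto simp: in_keys_iff)
  finally show "Poly_Mapping.lookup f k =
      Poly_Mapping.lookup (\<Sum>m\<in>K. Poly_Mapping.single m (Poly_Mapping.lookup f m)) k" by simp
qed

lemma times_poly_mapping_expand:
  fixes f g :: "'a::monoid_add \<Rightarrow>\<^sub>0 'b::semiring_0"
  shows "f * g = (\<Sum>x\<in>Poly_Mapping.keys f. \<Sum>y\<in>Poly_Mapping.keys g.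
      Poly_Mapping.single (x + y) (Poly_Mapping.lookup f x * Poly_Mapping.lookup g y))"
proof -
  have "f * g = (\<Sum>x\<in>Poly_Mapping.keys f. Poly_Mapping.single x (Poly_Mapping.lookup f x)) *
     (\<Sum>y\<in>Poly_Mapping.keys g. Poly_Mapping.single y (Poly_Mapping.lookup g y))"
    using poly_mapping_sum_single[of "Poly_Mapping.keys f" f]
      poly_mapping_sum_single[of "Poly_Mapping.keys g" g] by simp
  then show ?thesis by (simp add: sum_product mult_single)
qed

definition map_monoms :: "('a \<Rightarrow> 'c) \<Rightarrow> ('a \<Rightarrow>\<^sub>0 'b::comm_monoid_add) \<Rightarrow> 'c \<Rightarrow>\<^sub>0 'b" where
  "map_monoms \<phi> h = (\<Sum>m\<in>Poly_Mapping.keys h. Poly_Mapping.single (\<phi> m) (Poly_Mapping.lookup h m))"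

lemma map_monoms_superset:
  assumes "finite K" "Poly_Mapping.keys h \<subseteq> K"
  shows "map_monoms \<phi> h = (\<Sum>m\<in>K. Poly_Mapping.single (\<phi> m) (Poly_Mapping.lookup h m))"
  unfolding map_monoms_def
  by (rule sum.mono_neutral_left) (use assms in \<open>auto simp: in_keys_iff\<close>)

lemma map_monoms_add: "map_monoms \<phi> (h + h') = map_monoms \<phi> h + map_monoms \<phi> h'"
proof -
  let ?K = "Poly_Mapping.keys h \<union> Poly_Mapping.keys h'"
  have "Poly_Mapping.keys (h + h') \<subseteq> ?K" by (rule keys_add)
  then show ?thesis
    by (subst (1 2 3) map_monoms_superset[where K = ?K])
       (auto simp: lookup_add single_add sum.distrib)
qed

lemma map_monoms_diff:
  fixes h h' :: "'a \<Rightarrow>\<^sub>0 'b::ab_group_add"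
  shows "map_monoms \<phi> (h - h') = map_monoms \<phi> h - map_monoms \<phi> h'"
  using map_monoms_add[of \<phi> "h - h'" h'] by (simp add: algebra_simps)

lemma map_monoms_single [simp]:
  "map_monoms \<phi> (Poly_Mapping.single m c) = Poly_Mapping.single (\<phi> m) c"
  by (cases "c = 0") (auto simp: map_monoms_def)

lemma map_monoms_zero [simp]: "map_monoms \<phi> 0 = 0"
  by (simp add: map_monoms_def)

lemma map_monoms_sum: "map_monoms \<phi> (\<Sum>i\<in>I. f i) = (\<Sum>i\<in>I. map_monoms \<phi> (f i))"
  by (induction I rule: infinite_finite_induct) (simp_all add: map_monoms_add)

lemma map_monoms_mult:
  fixes h h' :: "'a::monoid_add \<Rightarrow>\<^sub>0 'b::comm_semiring_0"
  assumes add: "\<And>x y. \<phi> (x + y) = \<phi> x + \<phi> y"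
  shows "map_monoms \<phi> (h * h') = map_monoms \<phi> h * map_monoms \<phi> h'"
proof -
  have "map_monoms \<phi> (h * h') = (\<Sum>x\<in>Poly_Mapping.keys h. \<Sum>y\<in>Poly_Mapping.keys h'.
      Poly_Mapping.single (\<phi> x + \<phi> y) (Poly_Mapping.lookup h x * Poly_Mapping.lookup h' y))"
    by (subst times_poly_mapping_expand) (simp add: map_monoms_sum add)
  also have "\<dots> = map_monoms \<phi> h * map_monoms \<phi> h'"
    by (simp add: map_monoms_def sum_product mult_single)
  finally show ?thesis .
qed

(* rename_var b a m is the monomial m with t_b replaced by t_a. *)

definition rename_var :: "nat \<Rightarrow> nat \<Rightarrow> (nat \<Rightarrow>\<^sub>0 nat) \<Rightarrow> (nat \<Rightarrow>\<^sub>0 nat)" where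
  "rename_var b a m = Poly_Mapping.update b 0 m + Poly_Mapping.single a (Poly_Mapping.lookup m b)"

lemma rename_var_add: "rename_var b a (x + y) = rename_var b a x + rename_var b a y"
  by (rule poly_mapping_eqI) (simp add: rename_var_def lookup_add lookup_update lookup_single when_def)

lemma map_monoms_rename_var_mult:
  "map_monoms (rename_var b a) (f * g :: mpoly)
     = map_monoms (rename_var b a) f * map_monoms (rename_var b a) g"
  by (rule map_monoms_mult) (rule rename_var_add)

lemma tvar_power: "tvar i ^ e = Poly_Mapping.single (Poly_Mapping.single i e) 1"
proof (induction e)
  case (Suc e)
  have "Poly_Mapping.single i (Suc e) = Poly_Mapping.single i 1 + Poly_Mapping.single i e"
    by (simp flip: single_add)
  then show ?case using Suc by (simp add: tvar_def mult_single)
qed simp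

lemma tvar_eq_iff: "tvar i = tvar j \<longleftrightarrow> i = j"
  unfolding tvar_def by (metis lookup_single_eq lookup_single_not_eq zero_neq_one)

lemma lbl_eq_0_iff [simp]: "lbl j k = 0 \<longleftrightarrow> j = k"
  by (simp add: lbl_def tvar_eq_iff)

lemma map_monoms_rename_var_tvar:
  "map_monoms (rename_var b a) (tvar i) = tvar (if i = b then a else i)"
proof -
  have "rename_var b a (Poly_Mapping.single i 1) = Poly_Mapping.single (if i = b then a else i) 1"
    by (rule poly_mapping_eqI) (auto simp: rename_var_def lookup_add lookup_update lookup_single when_def)
  then show ?thesis by (simp add: tvar_def)
qed

lemma map_monoms_rename_var_lbl:
  "map_monoms (rename_var b a) (lbl j k) = lbl (if j = b then a else j) (if k = b then a else k)"
  by (simp add: lbl_def map_monoms_diff map_monoms_rename_var_tvar)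

lemma lbl_dvd_sub_rename_var_monom:
  "lbl a b dvd (Poly_Mapping.single m c - Poly_Mapping.single (rename_var b a m) c)"
proof -
  define m' where "m' = Poly_Mapping.update b 0 m"
  define e where "e = Poly_Mapping.lookup m b"
  have m: "m = m' + Poly_Mapping.single b e"
    by (rule poly_mapping_eqI) (simp add: m'_def e_def lookup_add lookup_update lookup_single when_def)
  have s: "rename_var b a m = m' + Poly_Mapping.single a e"
    by (simp add: rename_var_def m'_def e_def)
  have "Poly_Mapping.single m c - Poly_Mapping.single (rename_var b a m) c
      = Poly_Mapping.single m' c * (tvar b ^ e - tvar a ^ e)"
    by (subst (1) m, subst s) (simp add: tvar_power mult_single right_diff_distrib)
  moreover have "lbl a b dvd tvar b ^ e - tvar a ^ e"
  proof -
    have "tvar b ^ e - tvar a ^ e = (tvar b - tvar a) * (\<Sum>i<e. tvar a ^ (e - Suc i) * tvar b ^ i)"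
      by (rule power_diff_sumr2)
    also have "tvar b - tvar a = - lbl a b" by (simp add: lbl_def)
    finally show ?thesis by simp
  qed
  ultimately show ?thesis by simp
qed

lemma lbl_dvd_sub_rename_var: "lbl a b dvd (h - map_monoms (rename_var b a) h)"
proof -
  have "h - map_monoms (rename_var b a) h = (\<Sum>m\<in>Poly_Mapping.keys h.
      Poly_Mapping.single m (Poly_Mapping.lookup h m)
      - Poly_Mapping.single (rename_var b a m) (Poly_Mapping.lookup h m))"
    by (subst (1) poly_mapping_sum_single[of "Poly_Mapping.keys h" h])
       (simp_all add: map_monoms_def sum_subtractf)
  also have "lbl a b dvd \<dots>"
    by (intro dvd_sum lbl_dvd_sub_rename_var_monom)
  finally show ?thesis .
qed

lemma lbl_dvd_iff_rename_var_eq_0: "lbl a b dvd h \<longleftrightarrow> map_monoms (rename_var b a) h = 0"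
proof
  assume "lbl a b dvd h"
  then obtain g where h: "h = lbl a b * g" by (rule dvdE)
  have "map_monoms (rename_var b a) (lbl a b) = 0" by (simp add: map_monoms_rename_var_lbl)
  then show "map_monoms (rename_var b a) h = 0" by (simp add: h map_monoms_rename_var_mult)
next
  assume "map_monoms (rename_var b a) h = 0"
  with lbl_dvd_sub_rename_var[of a b h] show "lbl a b dvd h" by simp
qed

lemma lbl_dvd_mult_iff: "lbl a b dvd f * g \<longleftrightarrow> lbl a b dvd f \<or> lbl a b dvd g"
  by (simp add: lbl_dvd_iff_rename_var_eq_0 map_monoms_rename_var_mult)

lemma lbl_dvd_lbl_iff:
  assumes "a < b" "j < k"
  shows "lbl a b dvd lbl j k \<longleftrightarrow> (a, b) = (j, k)"
proof
  assume "lbl a b dvd lbl j k"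
  then have "lbl (if j = b then a else j) (if k = b then a else k) = 0"
    by (simp only: lbl_dvd_iff_rename_var_eq_0 map_monoms_rename_var_lbl)
  then have eq: "(if j = b then a else j) = (if k = b then a else k)"
    by (simp only: lbl_eq_0_iff)
  have "k = b"
  proof (rule ccontr)
    assume "k \<noteq> b"
    with eq have "(if j = b then a else j) = k" by (simp only: if_False)
    with assms show False by (cases "j = b") simp_all
  qed
  with eq assms have "j = a" by (cases "j = b") simp_all
  with \<open>k = b\<close> show "(a, b) = (j, k)" by simp
qed simp

section \<open>Degrees\<close>

lemma mdeg_superset:
  assumes "finite K" "Poly_Mapping.keys m \<subseteq> K"
  shows "mdeg m = (\<Sum>i\<in>K. Poly_Mapping.lookup m i)"
  unfolding mdeg_def
  by (rule sum.mono_neutral_left) (use assms in \<open>auto simp: in_keys_iff\<close>)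

lemma mdeg_add: "mdeg (x + y) = mdeg x + mdeg y"
proof -
  let ?K = "Poly_Mapping.keys x \<union> Poly_Mapping.keys y"
  have "Poly_Mapping.keys (x + y) \<subseteq> ?K" by (rule keys_add)
  then show ?thesis
    by (subst (1 2 3) mdeg_superset[where K = ?K]) (auto simp: lookup_add sum.distrib)
qed

(* Unlike poly_deg, the degree of the lexicographically largest monomial is additive on
   products. *)

definition lead_deg :: "mpoly \<Rightarrow> nat" where
  "lead_deg f = mdeg (Max (Poly_Mapping.keys f))"

lemma Max_keys_mult:
  fixes f g :: "'a::{ordered_cancel_comm_monoid_add, linorder} \<Rightarrow>\<^sub>0 'b::semiring_no_zero_divisors"
  assumes "f \<noteq> 0" "g \<noteq> 0"
  shows "Max (Poly_Mapping.keys (f * g)) = Max (Poly_Mapping.keys f) + Max (Poly_Mapping.keys g)"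
proof -
  define F where "F = Poly_Mapping.keys f"
  define G where "G = Poly_Mapping.keys g"
  have F: "finite F" "F \<noteq> {}" and G: "finite G" "G \<noteq> {}" using assms by (auto simp: F_def G_def)
  define q where "q = Max F + Max G"
  have le: "x \<le> q" if "x \<in> Poly_Mapping.keys (f * g)" for x
  proof -
    from keys_mult[of f g] that obtain a b where "x = a + b" "a \<in> F" "b \<in> G"
      by (auto simp: F_def G_def)
    then show ?thesis using F G unfolding q_def by (simp add: add_mono)
  qed
  \<comment> \<open>only the pair of maximal monomials contributes to the coefficient of q\<close>
  have max_pair: "a + b = q \<longleftrightarrow> a = Max F \<and> b = Max G" if "a \<in> F" "b \<in> G" for a b
  proof -
    have a: "a \<le> Max F" and b: "b \<le> Max G" using that F G by auto
    have "a + b < q" if "a \<noteq> Max F \<or> b \<noteq> Max G"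
      using that add_less_le_mono[OF _ b, of a] add_le_less_mono[OF a, of b] a b
      unfolding q_def by (auto simp: order.strict_iff_order)
    then show ?thesis unfolding q_def by force
  qed
  let ?c = "\<lambda>a b. Poly_Mapping.lookup f a * Poly_Mapping.lookup g b"
  have "Poly_Mapping.lookup (f * g) q = (\<Sum>a\<in>F. \<Sum>b\<in>G. if a + b = q then ?c a b else 0)"
    by (subst times_poly_mapping_expand) (simp add: F_def G_def lookup_sum lookup_single when_def)
  also have "\<dots> = (\<Sum>a\<in>F. if a = Max F then ?c a (Max G) else 0)"
  proof (intro sum.cong refl)
    fix a assume "a \<in> F"
    then have "(\<Sum>b\<in>G. if a + b = q then ?c a b else 0)
        = (\<Sum>b\<in>G. if a = Max F \<and> b = Max G then ?c a b else 0)"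
      using max_pair by (intro sum.cong refl) simp
    also have "\<dots> = (if a = Max F then ?c a (Max G) else 0)"
      using G by (cases "a = Max F") (simp_all add: sum.delta')
    finally show "(\<Sum>b\<in>G. if a + b = q then ?c a b else 0) = (if a = Max F then ?c a (Max G) else 0)" .
  qed
  also have "\<dots> = ?c (Max F) (Max G)"
    using F by (simp add: sum.delta')
  also have "\<dots> \<noteq> 0" using F G by (simp add: F_def G_def in_keys_iff[symmetric])
  finally have "q \<in> Poly_Mapping.keys (f * g)" by (simp add: in_keys_iff)
  then show ?thesis using le unfolding q_def F_def G_def by (intro Max_eqI) auto
qed

lemma lead_deg_mult: "f \<noteq> 0 \<Longrightarrow> g \<noteq> 0 \<Longrightarrow> lead_deg (f * g) = lead_deg f + lead_deg g"
  by (simp add: lead_deg_def Max_keys_mult mdeg_add)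

lemma keys_lbl:
  assumes "j \<noteq> k"
  shows "Poly_Mapping.keys (lbl j k) = {Poly_Mapping.single j 1, Poly_Mapping.single k 1}"
proof -
  have "Poly_Mapping.single j (1::nat) \<noteq> Poly_Mapping.single k 1"
    using assms by (metis lookup_single_eq lookup_single_not_eq zero_neq_one)
  then show ?thesis
    by (auto simp: lbl_def tvar_def in_keys_iff lookup_minus lookup_single when_def split: if_splits)
qed

lemma lead_deg_lbl: "j \<noteq> k \<Longrightarrow> lead_deg (lbl j k) = 1"
  using Max_in[of "Poly_Mapping.keys (lbl j k)"] keys_lbl[of j k] by (auto simp: lead_deg_def mdeg_def)

lemma lead_deg_prod_lbl:
  assumes "finite S" "\<forall>(j, k)\<in>S. j \<noteq> k"
  shows "lead_deg (\<Prod>(j, k)\<in>S. lbl j k) = card S"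
  using assms
proof (induction S rule: finite_induct)
  case (insert x S)
  obtain j k where x: "x = (j, k)" by (cases x)
  have "(\<Prod>(j, k)\<in>S. lbl j k) \<noteq> 0" using insert by (auto simp: prod_zero_iff)
  then show ?case using insert x by (simp add: lead_deg_mult lead_deg_lbl)
qed (simp add: lead_deg_def mdeg_def)

lemma card_le_lead_deg_if_lbl_dvd:
  assumes "finite S" "\<forall>(j, k)\<in>S. j < k \<and> lbl j k dvd f" "f \<noteq> 0"
  shows "card S \<le> lead_deg f"
  using assms
proof (induction S arbitrary: f rule: finite_induct)
  case (insert x S)
  obtain j k where x: "x = (j, k)" by (cases x)
  with insert.prems have "j < k" "lbl j k dvd f" by auto
  then obtain g where f: "f = lbl j k * g" by (auto elim: dvdE)
  with insert.prems have "g \<noteq> 0" by auto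
  have "\<forall>(a, b)\<in>S. a < b \<and> lbl a b dvd g"
  proof clarify
    fix a b assume ab: "(a, b) \<in> S"
    then have "a < b" "lbl a b dvd lbl j k * g" using insert.prems f by auto
    moreover have "(a, b) \<noteq> (j, k)" using ab insert.hyps(2) x by auto
    ultimately show "a < b \<and> lbl a b dvd g" using \<open>j < k\<close> by (auto simp: lbl_dvd_mult_iff lbl_dvd_lbl_iff)
  qed
  then have "card S \<le> lead_deg g" using insert.IH \<open>g \<noteq> 0\<close> by blast
  moreover have "lead_deg f = lead_deg g + 1"
    using f \<open>g \<noteq> 0\<close> \<open>j < k\<close> by (simp add: lead_deg_mult lead_deg_lbl)
  ultimately show ?case using insert.hyps by simp
qed simp

lemma homogeneous_0 [simp]: "homogeneous d 0"
  by (simp add: homogeneous_def)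

lemma homogeneous_diff: "homogeneous d f \<Longrightarrow> homogeneous d g \<Longrightarrow> homogeneous d (f - g)"
  unfolding homogeneous_def by (auto simp: in_keys_iff lookup_minus)

lemma homogeneous_lead_deg: "homogeneous d f \<Longrightarrow> f \<noteq> 0 \<Longrightarrow> lead_deg f = d"
  unfolding homogeneous_def lead_deg_def by simp

lemma homogeneous_poly_deg: "homogeneous d f \<Longrightarrow> f \<noteq> 0 \<Longrightarrow> poly_deg f = d"
  unfolding homogeneous_def poly_deg_def
  by (metis (no_types, lifting) Max_in finite_imageI finite_keys image_is_empty image_iff keys_eq_empty)

lemma homogeneous_eq_0_if_lbl_dvd:
  assumes "homogeneous d f" "finite S" "\<forall>(j, k)\<in>S. j < k \<and> lbl j k dvd f" "d < card S"
  shows "f = 0"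
  using card_le_lead_deg_if_lbl_dvd[OF assms(2,3)] homogeneous_lead_deg[OF assms(1)] assms(4)
  by fastforce

section \<open>Knutson-Tao classes\<close>

lemma HT_X_diff:
  assumes "HT_X n w q" "HT_X n w q'"
  shows "HT_X n w (\<lambda>u. q u - q' u)"
  unfolding HT_X_def gkm_def
proof (intro allI impI)
  fix u j k
  assume "u \<in> {u. bruhat_le n u w} \<and> 1 \<le> j \<and> j < k \<and> k \<le> n \<and> stu j k u \<in> {u. bruhat_le n u w}"
  then have "lbl j k dvd (q u - q (stu j k u)) - (q' u - q' (stu j k u))"
    using assms unfolding HT_X_def gkm_def by (blast intro: dvd_diff)
  then show "lbl j k dvd (q u - q' u) - (q (stu j k u) - q' (stu j k u))"
    by (simp add: algebra_simps)
qed

lemma HT_X_iota: "HT_flag n p \<Longrightarrow> HT_X n w (iota n w p)"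
  unfolding HT_flag_def HT_X_def gkm_def iota_def by (auto simp: bruhat_le_def)

lemma HT_X_eq_0_if_homogeneous_below_len:
  assumes gkm: "HT_X n w d"
    and hom: "\<And>u. bruhat_le n u w \<Longrightarrow> homogeneous D (d u)"
    and deg: "\<And>u. bruhat_le n u w \<Longrightarrow> d u \<noteq> 0 \<Longrightarrow> D < len n u"
    and "bruhat_le n u w"
  shows "d u = 0"
  using \<open>bruhat_le n u w\<close>
proof (induction "len n u" arbitrary: u rule: less_induct)
  case less
  have u: "u \<in> Sn n" using less.prems by (simp add: bruhat_le_def)
  have "\<forall>(j, k)\<in>inv_set n u. j < k \<and> lbl j k dvd d u"
  proof clarify
    fix j k assume inversion: "(j, k) \<in> inv_set n u"
    have edge: "mg_edge n w u (stu j k u)" by (rule mg_edge_stu_inversion[OF less.prems inversion])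
    then have "d (stu j k u) = 0"
      using less.hyps[OF len_stu_inversion_less[OF u inversion]] by (simp add: mg_edge_def)
    moreover have "lbl j k dvd d u - d (stu j k u)"
      using gkm edge inversion by (auto simp: HT_X_def gkm_def mg_edge_def inv_set_iff)
    ultimately show "j < k \<and> lbl j k dvd d u" using inversion by (simp add: inv_set_iff)
  qed
  then show "d u = 0"
    using homogeneous_eq_0_if_lbl_dvd[OF hom[OF less.prems] finite_inv_set] deg[OF less.prems]
    unfolding len_def by blast
qed

lemma KT_class_poly_deg:
  assumes "KT_class n w v q" "bruhat_le n v w"
  shows "poly_deg (q v) = len n v"
proof -
  have qv: "q v = (\<Prod>(j, k)\<in>inv_set n v. lbl j k)"
    using assms by (simp add: KT_class_def out_edges_eq_inv_set)
  have labels: "\<forall>(j, k)\<in>inv_set n v. j \<noteq> k" by (auto simp: inv_set_iff)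
  then have "q v \<noteq> 0" unfolding qv by (auto simp: prod_zero_iff[OF finite_inv_set])
  then have "homogeneous (poly_deg (q v)) (q v)" using assms unfolding KT_class_def by blast
  then have "lead_deg (q v) = poly_deg (q v)" using \<open>q v \<noteq> 0\<close> by (rule homogeneous_lead_deg)
  then show ?thesis using lead_deg_prod_lbl[OF finite_inv_set labels] by (simp add: qv len_def)
qed

lemma KT_class_homogeneous:
  assumes "KT_class n w v q" "bruhat_le n v w" "bruhat_le n u w"
  shows "homogeneous (len n v) (q u)"
proof (cases "q u = 0")
  case False
  with assms(1,3) have "homogeneous (poly_deg (q v)) (q u)" unfolding KT_class_def by blast
  then show ?thesis using KT_class_poly_deg[OF assms(1,2)] by simp
qed simp

lemma KT_class_unique:
  assumes q: "KT_class n w v q" and q': "KT_class n w v q'"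
    and "bruhat_le n v w" "bruhat_le n u w"
  shows "q u = q' u"
proof -
  define d where "d u = q u - q' u" for u
  have "q v = q' v" using q q' by (simp add: KT_class_def)
  have "homogeneous (len n v) (d u)" if "bruhat_le n u w" for u
    unfolding d_def using KT_class_homogeneous[OF q] KT_class_homogeneous[OF q'] assms(3) that
    by (intro homogeneous_diff)
  moreover have "len n v < len n u" if "bruhat_le n u w" "d u \<noteq> 0" for u
  proof -
    have "u \<noteq> v" using that \<open>q v = q' v\<close> by (auto simp: d_def)
    moreover have "q u \<noteq> 0 \<or> q' u \<noteq> 0" using that by (auto simp: d_def)
    ultimately have "(mg_edge n w)\<^sup>+\<^sup>+ u v" using q q' that by (auto simp: KT_class_def)
    then show ?thesis by (rule mg_path_len_less)
  qed
  moreover have "HT_X n w d"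
    using q q' HT_X_diff unfolding KT_class_def d_def by blast
  ultimately have "d u = 0" using HT_X_eq_0_if_homogeneous_below_len \<open>bruhat_le n u w\<close> by blast
  then show ?thesis by (simp add: d_def)
qed

lemma KT_class_iota_schubert_class:
  assumes "schubert_class n v p" "bruhat_le n v w"
  shows "KT_class n w v (iota n w p)"
proof -
  have HT: "HT_flag n p"
    and supp: "\<And>u. u \<in> Sn n \<Longrightarrow> \<not> bruhat_le n v u \<Longrightarrow> p u = 0"
    and hom: "\<And>u. u \<in> Sn n \<Longrightarrow> p u \<noteq> 0 \<Longrightarrow> homogeneous (len n v) (p u)"
    and pv: "p v = inv_prod n v"
    using assms(1) by (auto simp: schubert_class_def)
  define P where "P = iota n w p"
  have restr: "P u = p u" if "bruhat_le n u w" for u using that by (simp add: P_def iota_def)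
  have nonzero: "u \<in> Sn n" "p u \<noteq> 0" if "bruhat_le n u w" "P u \<noteq> 0" for u
    using that restr by (auto simp: bruhat_le_def)
  have v: "v \<in> Sn n" using assms(2) by (simp add: bruhat_le_def)
  have "inv_prod n v \<noteq> 0"
    by (auto simp: inv_prod_def prod_zero_iff[OF finite_inv_set] inv_set_iff)
  then have deg: "poly_deg (P v) = len n v"
    using hom[OF v] pv restr[OF assms(2)] homogeneous_poly_deg by auto
  show ?thesis
    unfolding KT_class_def P_def[symmetric]
  proof (intro conjI allI impI)
    show "HT_X n w P" unfolding P_def using HT by (rule HT_X_iota)
    show "P v = (\<Prod>(j, k)\<in>out_edges n w v. lbl j k)"
      using restr[OF assms(2)] pv by (simp add: inv_prod_def out_edges_eq_inv_set[OF assms(2)])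
  next
    fix u assume "bruhat_le n u w \<and> P u \<noteq> 0"
    then show "homogeneous (poly_deg (P v)) (P u)"
      using nonzero hom restr deg by auto
  next
    fix u assume u: "bruhat_le n u w \<and> u \<noteq> v \<and> \<not> (mg_edge n w)\<^sup>+\<^sup>+ u v"
    show "P u = 0"
    proof (rule ccontr)
      assume "P u \<noteq> 0"
      then have "bruhat_le n v u" using nonzero supp u by blast
      then show False using u mg_path_if_bruhat_lt[of n u w v] by (auto simp: bruhat_lt_def)
    qed
  qed
qed

theorem mainTheorem5:
  fixes n :: nat and v w :: "nat \<Rightarrow> nat" and p :: "(nat \<Rightarrow> nat) \<Rightarrow> mpoly"
  assumes "w \<in> Sn n" and "v \<in> Sn n" and "bruhat_le n v w"
    and "schubert_class n v p"
  shows "KT_class n w v (iota n w p) \<and>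
         (\<forall>q. KT_class n w v q \<longrightarrow> (\<forall>u. bruhat_le n u w \<longrightarrow> q u = iota n w p u))"
proof -
  have "KT_class n w v (iota n w p)"
    using assms(4,3) by (rule KT_class_iota_schubert_class)
  moreover have "q u = iota n w p u" if "KT_class n w v q" "bruhat_le n u w" for q u
    using KT_class_unique[OF that(1) \<open>KT_class n w v (iota n w p)\<close> assms(3) that(2)] .
  ultimately show ?thesis by blast
qed

end
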